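(* For every dimension $d\ge 2$, Algorithm ExtDrift (defined in the context) is $3$-competitive for the line chasing problem in $\mathbb{R}^d$: for every initial point $P_0\in\mathbb{R}^d$ and every finite sequence of lines $X_1,\dots,X_m$ in $\mathbb{R}^d$, the path $P_0,P_1,\dots,P_m$ produced by ExtDrift satisfies $\sum_{t=1}^m |P_{t-1}P_t| \le 3\cdot\mathrm{OPT}$, where $\mathrm{OPT}=\min\{\sum_{t=1}^m |A_{t-1}A_t| : A_0=P_0,\ A_t\in X_t\}$.
   Context: $|XY|$ denotes Euclidean distance. Line chasing problem: given an initial point $P_0\in\mathbb{R}^d$ and lines $X_1,\dots,X_m$ revealed one at a time, an online algorithm must, upon seeing $X_t$ (and not later lines), choose $P_t\in X_t$; its cost is $\sum_t|P_{t-1}P_t|$. It is $c$-competitive if its cost is at most $c\cdot\mathrm{OPT}$ on every input. Planar Algorithm Drift: given a previous line $L$ in a plane, current point $P\in L$, and new line $L'$ in that plane, for $X\in L$ let $\bar X$ be the orthogonal projection of $X$ onto $L'$. If $L'$ does not meet $L$ in a single point, move to $\bar P$. Otherwise let $S=L\cap L'$, $r=|SP|$, $h=|P\bar P|$, $s=|S\bar P|$, $x=\frac{1}{\sqrt2}(h+s-r)$, and move to the point $P'\in L'$ on the ray from $S$ through $\bar P$ (or $P'=S$ if $\bar P=S$) with $|SP'|=s-x$. Algorithm ExtDrift (in $\mathbb{R}^d$): let $L$ be the previous request line (for the first request, an arbitrary fixed line through $P_0$), $P\in L$ the current position, and $L'$ the new request. If $P\in L'$, stay at $P$. Otherwise let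 $U$ be the unique 2-dimensional plane containing $L'$ and $P$, and make the move prescribed by Drift within $U$ for the current point $P$, new line $L'$, and previous line equal to the orthogonal projection of $L$ onto $U$ (if this projection is the single point $P$, an arbitrary line in $U$ through $P$ is used). *)

theory Defs
  imports "HOL-Analysis.Analysis"
begin

definition is_line :: "'a::euclidean_space set \<Rightarrow> bool" where
  "is_line L \<longleftrightarrow> affine L \<and> aff_dim L = 1"

text \<open>Planar algorithm Drift. M is the previous line, P the current point (on M),
  L' the new line. Orthogonal projection onto L' is the closest point map.
  Returns the new position.\<close>
definition drift :: "'a::euclidean_space set \<Rightarrow> 'a \<Rightarrow> 'a set \<Rightarrow> 'a" where
  "drift M P L' =
    (let Pb = closest_point L' P in
     if \<exists>S. M \<inter> L' = {S} then
       (let S = (THE S. M \<inter> L' = {S});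
            r = dist S P; h = dist P Pb; s = dist S Pb;
            x = (h + s - r) / sqrt 2
        in if Pb = S then S else S + ((s - x) / s) *\<^sub>R (Pb - S))
     else Pb)"

text \<open>The relation allows every admissible
  arbitrary choice of auxiliary line (when the projection of L onto the plane
  degenerates to the point P).\<close>
definition extdrift_step :: "'a::euclidean_space set \<Rightarrow> 'a \<Rightarrow> 'a set \<Rightarrow> 'a \<Rightarrow> bool" where
  "extdrift_step L P L' P' \<longleftrightarrow>
     (P \<in> L' \<and> P' = P) \<or>
     (P \<notin> L' \<and>
       (let U = affine hull (insert P L');
            Lp = closest_point U ` L
        in \<exists>M. (if Lp = {P} then is_line M \<and> M \<subseteq> U \<and> P \<in> M else M = Lp)
               \<and> P' = drift M P L'))"

definition path_cost :: "(nat \<Rightarrow> 'a::euclidean_space) \<Rightarrow> nat \<Rightarrow> real" where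
  "path_cost A m = (\<Sum>t=1..m. dist (A (t - 1)) (A t))"

definition OPT :: "'a::euclidean_space \<Rightarrow> (nat \<Rightarrow> 'a set) \<Rightarrow> nat \<Rightarrow> real" where
  "OPT P0 X m = Inf {path_cost A m | A. A 0 = P0 \<and> (\<forall>t\<in>{1..m}. A t \<in> X t)}"

end

theory Submission
  imports Defs
begin

text \<open>
  Fix any feasible offline path A and use the potential sqrt 3 * |P_t A_t|. It suffices
  that one ExtDrift step from P on L to P' on L', against an offline step from A on L to
  A' on L', satisfies |P P'| + sqrt 3 * |P' A'| \<le> sqrt 3 * |P A| + 3 * |A A'|.
  Orthogonal projection onto the plane U through P and L' is 1-Lipschitz, fixes P and A',
  and maps A to a point B of the line on which Drift operates; so A may be replaced by B
  and everything happens in U. In coordinates with L' as an axis the inequality becomes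
  one about reals. Writing B = P + l (S - P), it reduces to the cases B = P and B = S,
  for which the factor 1 / sqrt 2 of Drift is tuned, and to the Cauchy-Schwarz bound
  sqrt 6 * a + sqrt 3 * b \<le> 3 * sqrt (a^2 + b^2).
\<close>

section \<open>Scalar inequalities\<close>

text \<open>Drift in coordinates: h is the distance from P to its foot on the new line, s the
  distance from the foot to the intersection point S, and r = |S P|. The new point lies
  between the foot and S, at distance x from the foot.\<close>

lemma drift_offset_bounds:
  fixes h s :: real
  assumes "h > 0" "s \<ge> 0"
  defines "r \<equiv> sqrt (h\<^sup>2 + s\<^sup>2)"
  defines "x \<equiv> (h + s - r) / sqrt 2"
  shows "0 \<le> x" "x \<le> s" "s \<le> r" "sqrt 2 * x \<le> h"
proof -
  have "s \<le> r" "h \<le> r" unfolding r_def by (simp_all add: real_le_rsqrt)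
  moreover have "r \<le> h + s"
    unfolding r_def using assms by (intro real_le_lsqrt) (simp_all add: power2_eq_square algebra_simps)
  moreover have "h + s - r \<le> sqrt 2 * s"
    using \<open>h \<le> r\<close> \<open>s \<ge> 0\<close> mult_right_mono[of 1 "sqrt 2" s] by simp
  moreover have "sqrt 2 * x = h + s - r" unfolding x_def by simp
  ultimately show "0 \<le> x" "x \<le> s" "s \<le> r" "sqrt 2 * x \<le> h"
    unfolding x_def by (simp_all add: divide_le_eq le_divide_eq mult.commute)
qed

lemma drift_move_bounds:
  fixes h s :: real
  assumes "h > 0" "s \<ge> 0"
  defines "r \<equiv> sqrt (h\<^sup>2 + s\<^sup>2)"
  defines "x \<equiv> (h + s - r) / sqrt 2"
  shows "sqrt (h\<^sup>2 + x\<^sup>2) + sqrt 3 * x \<le> sqrt 6 * h"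
    and "sqrt (h\<^sup>2 + x\<^sup>2) + sqrt 3 * (s - x) \<le> sqrt 3 * r"
proof -
  note bounds = drift_offset_bounds[OF assms(1,2), folded r_def, folded x_def]
  have sqrt6: "sqrt 6 = sqrt 2 * sqrt 3" by (simp flip: real_sqrt_mult)
  have "(sqrt 2 * x)\<^sup>2 \<le> h\<^sup>2"
    by (rule power_mono) (use bounds in auto)
  then have "2 * x\<^sup>2 \<le> h\<^sup>2" by (simp add: power_mult_distrib)
  then have "h\<^sup>2 + x\<^sup>2 \<le> (sqrt 6 / 2 * h)\<^sup>2"
    by (simp add: power_mult_distrib power_divide)
  then have "sqrt (h\<^sup>2 + x\<^sup>2) \<le> sqrt 6 / 2 * h"
    using assms(1) by (intro real_le_lsqrt) auto
  moreover have "sqrt 3 * x \<le> sqrt 6 / 2 * h"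
  proof -
    have "sqrt 3 * (sqrt 2 * (sqrt 2 * x)) \<le> sqrt 3 * (sqrt 2 * h)"
      using bounds(4) by (intro mult_left_mono) auto
    then show ?thesis by (simp add: sqrt6 algebra_simps)
  qed
  ultimately show "sqrt (h\<^sup>2 + x\<^sup>2) + sqrt 3 * x \<le> sqrt 6 * h" by simp
  define u where "u = r - s"
  have "u \<ge> 0" "x \<ge> 0" using bounds by (simp_all add: u_def)
  have h_eq: "h = u + sqrt 2 * x" unfolding u_def x_def by simp
  have "sqrt 2 * (u * x) \<le> 3 * (u * x)"
    using \<open>u \<ge> 0\<close> \<open>x \<ge> 0\<close> by (intro mult_right_mono) (auto simp: real_sqrt_le_iff real_le_lsqrt)
  moreover have "h\<^sup>2 + x\<^sup>2 = u\<^sup>2 + 2 * (sqrt 2 * (u * x)) + 3 * x\<^sup>2"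
    unfolding h_eq by (simp add: power2_eq_square algebra_simps)
  moreover have "(sqrt 3 * (u + x))\<^sup>2 = 3 * u\<^sup>2 + 6 * (u * x) + 3 * x\<^sup>2"
    by (simp add: power2_eq_square algebra_simps)
  ultimately have "h\<^sup>2 + x\<^sup>2 \<le> (sqrt 3 * (u + x))\<^sup>2"
    by (smt (verit) zero_le_power2)
  then have "sqrt (h\<^sup>2 + x\<^sup>2) \<le> sqrt 3 * (u + x)"
    using \<open>u \<ge> 0\<close> \<open>x \<ge> 0\<close> by (intro real_le_lsqrt) auto
  then show "sqrt (h\<^sup>2 + x\<^sup>2) + sqrt 3 * (s - x) \<le> sqrt 3 * r"
    by (simp add: u_def algebra_simps)
qed

text \<open>For B = P + l (S - P): |P B| = |l| r, and |l s - x| is the distance from the new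
  point to the foot of B on the new line.\<close>

lemma drift_move_potential:
  fixes h s l :: real
  assumes "h > 0" "s \<ge> 0"
  defines "r \<equiv> sqrt (h\<^sup>2 + s\<^sup>2)"
  defines "x \<equiv> (h + s - r) / sqrt 2"
  shows "sqrt (h\<^sup>2 + x\<^sup>2) + sqrt 3 * \<bar>l * s - x\<bar> \<le> sqrt 3 * \<bar>l\<bar> * r + sqrt 6 * \<bar>1 - l\<bar> * h"
proof -
  define D where "D = sqrt (h\<^sup>2 + x\<^sup>2)"
  have near: "D + sqrt 3 * x \<le> sqrt 6 * h" and far: "D + sqrt 3 * (s - x) \<le> sqrt 3 * r"
    using drift_move_bounds[OF assms(1,2)] unfolding D_def r_def x_def by auto
  have "0 \<le> x" "x \<le> s" "s \<le> r"
    using drift_offset_bounds[OF assms(1,2)] unfolding r_def x_def by auto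
  consider "l \<le> 0" | "0 \<le> l" "l \<le> 1" | "1 \<le> l" by linarith
  then have "D + sqrt 3 * \<bar>l * s - x\<bar> \<le> sqrt 3 * \<bar>l\<bar> * r + sqrt 6 * \<bar>1 - l\<bar> * h"
  proof cases
    case 1
    have "l * s \<le> 0" using 1 \<open>0 \<le> s\<close> by (rule mult_nonpos_nonneg)
    then have "\<bar>l * s - x\<bar> = x + \<bar>l\<bar> * s" using 1 \<open>0 \<le> x\<close> by simp
    also have "\<dots> \<le> x + \<bar>l\<bar> * r" using \<open>s \<le> r\<close> by (simp add: mult_left_mono)
    finally have "\<bar>l * s - x\<bar> \<le> x + \<bar>l\<bar> * r" .
    from mult_left_mono[OF this, of "sqrt 3"]
    have "sqrt 3 * \<bar>l * s - x\<bar> \<le> sqrt 3 * x + sqrt 3 * \<bar>l\<bar> * r"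
      by (simp add: distrib_left mult.assoc)
    moreover have "sqrt 6 * h \<le> sqrt 6 * \<bar>1 - l\<bar> * h"
      using 1 \<open>h > 0\<close> by (simp add: mult.assoc)
    ultimately show ?thesis using near by linarith
  next
    case 2
    have "l * (s - x) \<ge> 0" "(1 - l) * x \<ge> 0" using 2 \<open>0 \<le> x\<close> \<open>x \<le> s\<close> by simp_all
    moreover have "l * s - x = l * (s - x) - (1 - l) * x" by (simp add: algebra_simps)
    ultimately have "\<bar>l * s - x\<bar> \<le> l * (s - x) + (1 - l) * x" by arith
    from mult_left_mono[OF this, of "sqrt 3"]
    have "D + sqrt 3 * \<bar>l * s - x\<bar> \<le> l * (D + sqrt 3 * (s - x)) + (1 - l) * (D + sqrt 3 * x)"
      by (simp add: algebra_simps)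
    also have "\<dots> \<le> l * (sqrt 3 * r) + (1 - l) * (sqrt 6 * h)"
      using 2 near far by (intro add_mono mult_left_mono) auto
    finally show ?thesis using 2 by (simp add: ac_simps)
  next
    case 3
    have "(l - 1) * s \<le> (l - 1) * r" using 3 \<open>s \<le> r\<close> by (intro mult_left_mono) auto
    moreover have "x \<le> l * s" using 3 \<open>x \<le> s\<close> \<open>0 \<le> s\<close> mult_right_mono[of 1 l s] by simp
    ultimately have "\<bar>l * s - x\<bar> \<le> (s - x) + (l - 1) * r" by (simp add: algebra_simps)
    from mult_left_mono[OF this, of "sqrt 3"]
    have "sqrt 3 * \<bar>l * s - x\<bar> \<le> sqrt 3 * (s - x) + sqrt 3 * l * r - sqrt 3 * r"
      by (simp add: algebra_simps)
    moreover have "0 \<le> sqrt 6 * \<bar>1 - l\<bar> * h" using \<open>h > 0\<close> by simp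
    ultimately show ?thesis using 3 far by simp
  qed
  then show ?thesis unfolding D_def .
qed

lemma sqrt6_sqrt3_le_3_sqrt:
  fixes a b :: real
  shows "sqrt 6 * a + sqrt 3 * b \<le> 3 * sqrt (a\<^sup>2 + b\<^sup>2)"
proof (rule power2_le_imp_le)
  have "sqrt 6 = sqrt 2 * sqrt 3" by (simp flip: real_sqrt_mult)
  then have "(sqrt 6 * a + sqrt 3 * b)\<^sup>2 = 9 * (a\<^sup>2 + b\<^sup>2) - 3 * (a - sqrt 2 * b)\<^sup>2"
    by (simp add: power2_eq_square algebra_simps)
  then show "(sqrt 6 * a + sqrt 3 * b)\<^sup>2 \<le> (3 * sqrt (a\<^sup>2 + b\<^sup>2))\<^sup>2"
    by (simp add: power_mult_distrib)
qed simp

lemma drift_potential_intersecting_scalar: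
  fixes h \<sigma> \<alpha> l :: real
  assumes "h > 0"
  defines "x \<equiv> (h + \<bar>\<sigma>\<bar> - sqrt (h\<^sup>2 + \<sigma>\<^sup>2)) / sqrt 2"
  shows "sqrt (h\<^sup>2 + x\<^sup>2) + sqrt 3 * \<bar>sgn \<sigma> * x - \<alpha>\<bar>
    \<le> sqrt 3 * \<bar>l\<bar> * sqrt (h\<^sup>2 + \<sigma>\<^sup>2) + 3 * sqrt (((1 - l) * h)\<^sup>2 + (l * \<sigma> - \<alpha>)\<^sup>2)"
proof -
  have "\<bar>sgn \<sigma> * x - l * \<sigma>\<bar> = \<bar>l * \<bar>\<sigma>\<bar> - x\<bar>"
  proof (cases "\<sigma> = 0")
    case True
    then show ?thesis using \<open>h > 0\<close> by (simp add: x_def)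
  next
    case False
    then have "sgn \<sigma> * x - l * \<sigma> = sgn \<sigma> * (x - l * \<bar>\<sigma>\<bar>)"
      by (simp add: algebra_simps abs_mult_sgn)
    then show ?thesis using False by (simp add: abs_mult abs_minus_commute)
  qed
  then have "\<bar>sgn \<sigma> * x - \<alpha>\<bar> \<le> \<bar>l * \<bar>\<sigma>\<bar> - x\<bar> + \<bar>l * \<sigma> - \<alpha>\<bar>" by linarith
  from mult_left_mono[OF this, of "sqrt 3"]
  have "sqrt (h\<^sup>2 + x\<^sup>2) + sqrt 3 * \<bar>sgn \<sigma> * x - \<alpha>\<bar>
      \<le> sqrt (h\<^sup>2 + x\<^sup>2) + sqrt 3 * \<bar>l * \<bar>\<sigma>\<bar> - x\<bar> + sqrt 3 * \<bar>l * \<sigma> - \<alpha>\<bar>"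
    by (simp add: distrib_left)
  also have "\<dots> \<le> sqrt 3 * \<bar>l\<bar> * sqrt (h\<^sup>2 + \<sigma>\<^sup>2) + (sqrt 6 * (\<bar>1 - l\<bar> * h) + sqrt 3 * \<bar>l * \<sigma> - \<alpha>\<bar>)"
    using drift_move_potential[OF \<open>h > 0\<close> abs_ge_zero, of \<sigma> l] by (simp add: x_def mult.assoc)
  also have "\<dots> \<le> sqrt 3 * \<bar>l\<bar> * sqrt (h\<^sup>2 + \<sigma>\<^sup>2) + 3 * sqrt (((1 - l) * h)\<^sup>2 + (l * \<sigma> - \<alpha>)\<^sup>2)"
    using sqrt6_sqrt3_le_3_sqrt[of "\<bar>1 - l\<bar> * h" "\<bar>l * \<sigma> - \<alpha>\<bar>"] \<open>h > 0\<close>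
    by (simp add: power_mult_distrib)
  finally show ?thesis .
qed

lemma drift_potential_parallel_scalar:
  fixes h \<alpha> \<mu> :: real
  assumes "h > 0"
  shows "h + sqrt 3 * \<bar>\<alpha>\<bar> \<le> sqrt 3 * \<bar>\<mu>\<bar> + 3 * sqrt (h\<^sup>2 + (\<mu> - \<alpha>)\<^sup>2)"
proof -
  have "h \<le> sqrt 6 * h" using \<open>h > 0\<close> by simp
  moreover have "\<bar>\<alpha>\<bar> \<le> \<bar>\<mu>\<bar> + \<bar>\<mu> - \<alpha>\<bar>" by linarith
  from mult_left_mono[OF this, of "sqrt 3"]
  have "sqrt 3 * \<bar>\<alpha>\<bar> \<le> sqrt 3 * \<bar>\<mu>\<bar> + sqrt 3 * \<bar>\<mu> - \<alpha>\<bar>" by (simp add: distrib_left)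
  ultimately show ?thesis
    using sqrt6_sqrt3_le_3_sqrt[of h "\<bar>\<mu> - \<alpha>\<bar>"] by simp
qed

section \<open>Lines and orthogonal projection\<close>

lemma closest_point_eqI_orthogonal:
  fixes S :: "'a::euclidean_space set"
  assumes "q \<in> S" and orth: "\<And>y. y \<in> S \<Longrightarrow> inner (a - q) (y - q) = 0"
  shows "closest_point S a = q"
  unfolding closest_point_def
proof (rule some_equality)
  have pythagoras: "(dist a y)\<^sup>2 = (dist a q)\<^sup>2 + (dist q y)\<^sup>2" if "y \<in> S" for y
  proof -
    have "(dist a y)\<^sup>2 = inner ((a - q) - (y - q)) ((a - q) - (y - q))"
      by (simp add: dist_norm power2_norm_eq_inner)
    also have "\<dots> = (dist a q)\<^sup>2 + (dist q y)\<^sup>2"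
      using orth[OF that]
      by (simp add: dist_norm inner_diff_left inner_diff_right power2_norm_eq_inner inner_commute)
    finally show ?thesis .
  qed
  have "dist a q \<le> dist a y" if "y \<in> S" for y
    by (rule power2_le_imp_le) (simp_all add: pythagoras[OF that])
  then show "q \<in> S \<and> (\<forall>y\<in>S. dist a q \<le> dist a y)" using \<open>q \<in> S\<close> by blast
  fix x assume x: "x \<in> S \<and> (\<forall>y\<in>S. dist a x \<le> dist a y)"
  then have "dist a x \<le> dist a q" using \<open>q \<in> S\<close> by blast
  then have "(dist a x)\<^sup>2 \<le> (dist a q)\<^sup>2" by (simp add: power_mono)
  then show "x = q" using pythagoras[of x] x by simp
qed

lemma is_line_eq_range:
  fixes L :: "'a::euclidean_space set"
  assumes "is_line L" "P \<in> L"
  obtains v where "v \<noteq> 0" "L = range (\<lambda>t. P + t *\<^sub>R v)"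
proof -
  have "affine L" and "aff_dim L = 1" using assms(1) by (auto simp: is_line_def)
  then have "L \<noteq> {P}" by auto
  then obtain Q where "Q \<in> L" "Q \<noteq> P" using assms(2) by blast
  then have "affine hull {P, Q} = L"
    using assms(2) \<open>affine L\<close> \<open>aff_dim L = 1\<close>
    by (intro affine_dim_equal) (auto simp: hull_minimal)
  then show ?thesis
    using that[of "Q - P"] \<open>Q \<noteq> P\<close> by (simp add: affine_hull_2_alt)
qed

lemma range_line_reparametrize:
  fixes P v :: "'a::real_vector"
  assumes "k \<noteq> 0"
  shows "range (\<lambda>t. (P + a *\<^sub>R v) + t *\<^sub>R (k *\<^sub>R v)) = range (\<lambda>t. P + t *\<^sub>R v)"
proof (intro set_eqI iffI)
  fix x assume "x \<in> range (\<lambda>t. (P + a *\<^sub>R v) + t *\<^sub>R (k *\<^sub>R v))"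
  then obtain t where "x = P + (a + t * k) *\<^sub>R v" by (auto simp: algebra_simps)
  then show "x \<in> range (\<lambda>t. P + t *\<^sub>R v)" by blast
next
  fix x assume "x \<in> range (\<lambda>t. P + t *\<^sub>R v)"
  then obtain t where x: "x = P + t *\<^sub>R v" by blast
  have "((t - a) / k) *\<^sub>R (k *\<^sub>R v) = (t - a) *\<^sub>R v" using assms by simp
  then have "x = (P + a *\<^sub>R v) + ((t - a) / k) *\<^sub>R (k *\<^sub>R v)"
    unfolding x by (simp add: algebra_simps)
  then show "x \<in> range (\<lambda>t. (P + a *\<^sub>R v) + t *\<^sub>R (k *\<^sub>R v))" by blast
qed

lemma closest_point_line:
  fixes Q w :: "'a::euclidean_space"
  assumes "norm w = 1"
  shows "closest_point (range (\<lambda>t. Q + t *\<^sub>R w)) y = Q + inner (y - Q) w *\<^sub>R w"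
proof (rule closest_point_eqI_orthogonal)
  have "inner w w = 1" using assms by (simp add: dot_square_norm)
  then have "inner (y - (Q + inner (y - Q) w *\<^sub>R w)) w = 0"
    by (simp add: inner_diff_left inner_add_left)
  then show "inner (y - (Q + inner (y - Q) w *\<^sub>R w)) (z - (Q + inner (y - Q) w *\<^sub>R w)) = 0"
    if "z \<in> range (\<lambda>t. Q + t *\<^sub>R w)" for z
    using that by (auto simp flip: scaleR_diff_left)
qed (metis rangeI)

lemma is_line_nonempty: "is_line L \<Longrightarrow> L \<noteq> {}"
  by (auto simp: is_line_def)

lemma closest_point_in_line: "is_line L \<Longrightarrow> closest_point L P \<in> L"
  by (intro closest_point_in_set affine_closed is_line_nonempty) (auto simp: is_line_def)

lemma drift_in_line:
  assumes "is_line L'"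
  shows "drift M P L' \<in> L'"
proof (cases "\<exists>S. M \<inter> L' = {S}")
  case True
  then obtain S where S: "M \<inter> L' = {S}" by blast
  then have "S \<in> L'" and "(THE S. M \<inter> L' = {S}) = S" by auto
  have "S + k *\<^sub>R (closest_point L' P - S) \<in> L'" for k
    using assms \<open>S \<in> L'\<close> closest_point_in_line[OF assms]
    by (intro mem_affine_3_minus) (auto simp: is_line_def)
  then show ?thesis
    using \<open>S \<in> L'\<close> S \<open>(THE S. M \<inter> L' = {S}) = S\<close> by (simp add: drift_def Let_def)
qed (simp add: drift_def closest_point_in_line[OF assms])

lemma extdrift_step_in_line: "is_line L' \<Longrightarrow> extdrift_step L P L' P' \<Longrightarrow> P' \<in> L'"
  using drift_in_line unfolding extdrift_step_def by (auto simp: Let_def)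

section \<open>Orthonormal coordinates in a plane\<close>

text \<open>In the plane of the current point and the new line, the new line will be the axis
  and the current point will be pt 0 h, so that c is its foot.\<close>

locale plane_frame =
  fixes c w e :: "'a::euclidean_space"
  assumes norm_w: "norm w = 1" and norm_e: "norm e = 1" and inner_w_e [simp]: "inner w e = 0"
begin

definition pt :: "real \<Rightarrow> real \<Rightarrow> 'a" where
  "pt a b = c + a *\<^sub>R w + b *\<^sub>R e"

definition axis :: "'a set" where
  "axis = range (\<lambda>a. pt a 0)"

definition plane :: "'a set" where
  "plane = {pt a b | a b. True}"

lemma inner_frame [simp]: "inner w w = 1" "inner e e = 1" "inner e w = 0"
  using norm_w norm_e inner_w_e by (simp_all add: dot_square_norm inner_commute)

lemma pt_diff: "pt a b - pt a' b' = (a - a') *\<^sub>R w + (b - b') *\<^sub>R e"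
  by (simp add: pt_def algebra_simps)

lemma dist_pt: "dist (pt a b) (pt a' b') = sqrt ((a - a')\<^sup>2 + (b - b')\<^sup>2)"
proof -
  have "(dist (pt a b) (pt a' b'))\<^sup>2 = inner (pt a b - pt a' b') (pt a b - pt a' b')"
    by (simp add: dist_norm power2_norm_eq_inner)
  also have "\<dots> = (a - a')\<^sup>2 + (b - b')\<^sup>2"
    by (simp add: pt_diff inner_add_left inner_add_right power2_eq_square)
  finally have "(dist (pt a b) (pt a' b'))\<^sup>2 = (a - a')\<^sup>2 + (b - b')\<^sup>2" .
  then show ?thesis by (simp add: real_sqrt_unique)
qed

lemma pt_eq_iff: "pt a b = pt a' b' \<longleftrightarrow> a = a' \<and> b = b'"
  using dist_pt[of a b a' b'] by (auto simp: power2_eq_square add_nonneg_eq_0_iff)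

lemma inner_pt [simp]: "inner (pt a b - c) w = a" "inner (pt a b - c) e = b"
  by (simp_all add: pt_def inner_add_left)

lemma closest_point_axis: "closest_point axis y = pt (inner (y - c) w) 0"
proof -
  have "axis = range (\<lambda>t. c + t *\<^sub>R w)" by (simp add: axis_def pt_def)
  then show ?thesis using closest_point_line[OF norm_w] by (simp add: pt_def)
qed

lemma closest_point_plane: "closest_point plane y = pt (inner (y - c) w) (inner (y - c) e)"
proof (rule closest_point_eqI_orthogonal)
  fix z assume "z \<in> plane"
  then obtain a b where z: "z = pt a b" by (auto simp: plane_def)
  let ?q = "pt (inner (y - c) w) (inner (y - c) e)"
  have "inner (y - ?q) w = 0" "inner (y - ?q) e = 0"
    by (simp_all add: pt_def inner_diff_left inner_add_left)
  then show "inner (y - ?q) (z - ?q) = 0"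
    by (simp add: z pt_diff inner_add_right)
qed (auto simp: plane_def)

lemma pt_add_scaleR_diff:
  "pt a b + t *\<^sub>R (pt a' b' - pt a b) = pt (a + t * (a' - a)) (b + t * (b' - b))"
  by (simp add: pt_def algebra_simps)

lemma affine_plane: "affine plane"
proof (unfold affine_def, intro ballI allI impI)
  fix x y u v assume "x \<in> plane" "y \<in> plane" "u + v = (1::real)"
  then obtain a b a' b' where "x = pt a b" "y = pt a' b'" by (auto simp: plane_def)
  with \<open>u + v = 1\<close> have "u *\<^sub>R x + v *\<^sub>R y = pt (u * a + v * a') (u * b + v * b')"
    by (simp add: pt_def algebra_simps flip: scaleR_add_left)
  then show "u *\<^sub>R x + v *\<^sub>R y \<in> plane" by (auto simp: plane_def)
qed

lemma affine_hull_insert_axis: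
  assumes "h \<noteq> 0"
  shows "affine hull (insert (pt 0 h) axis) = plane"
proof
  show "affine hull (insert (pt 0 h) axis) \<subseteq> plane"
    using affine_plane by (intro hull_minimal) (auto simp: axis_def plane_def)
next
  let ?H = "affine hull (insert (pt 0 h) axis)"
  have on_axis: "pt a 0 \<in> ?H" for a by (simp add: axis_def hull_inc)
  have "pt a b \<in> ?H" for a b
  proof -
    have "pt a 0 + (b / h) *\<^sub>R (pt 0 h - pt 0 0) \<in> ?H"
      by (rule mem_affine_3_minus) (auto simp: on_axis hull_inc)
    then show ?thesis using assms by (simp add: pt_def)
  qed
  then show "plane \<subseteq> ?H" by (auto simp: plane_def)
qed

lemma line_in_plane_eq_range:
  assumes "is_line M" "M \<subseteq> plane" "pt p q \<in> M"
  obtains a b where "M = range (\<lambda>t. pt (p + t * a) (q + t * b))"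
proof -
  obtain v where M: "M = range (\<lambda>t. pt p q + t *\<^sub>R v)"
    using is_line_eq_range[OF assms(1,3)] by blast
  then have "pt p q + v \<in> plane" using assms(2) by (metis (no_types) rangeI scaleR_one subsetD)
  then obtain a' b' where "v = pt a' b' - pt p q" by (auto simp: plane_def algebra_simps)
  then have "M = range (\<lambda>t. pt (p + t * (a' - p)) (q + t * (b' - q)))"
    unfolding M by (simp add: pt_add_scaleR_diff)
  then show ?thesis using that by blast
qed

lemma drift_eq_intersecting:
  assumes "h > 0" "M \<inter> axis = {pt \<sigma> 0}"
  shows "drift M (pt 0 h) axis = pt (sgn \<sigma> * ((h + \<bar>\<sigma>\<bar> - sqrt (h\<^sup>2 + \<sigma>\<^sup>2)) / sqrt 2)) 0"
proof -
  define x where "x = (h + \<bar>\<sigma>\<bar> - sqrt (h\<^sup>2 + \<sigma>\<^sup>2)) / sqrt 2"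
  have the_S: "(THE S. M \<inter> axis = {S}) = pt \<sigma> 0" using assms(2) by simp
  have foot: "closest_point axis (pt 0 h) = pt 0 0" by (simp add: closest_point_axis)
  have dists: "dist (pt \<sigma> 0) (pt 0 h) = sqrt (h\<^sup>2 + \<sigma>\<^sup>2)" "dist (pt 0 h) (pt 0 0) = h"
    "dist (pt \<sigma> 0) (pt 0 0) = \<bar>\<sigma>\<bar>"
    using \<open>h > 0\<close> by (simp_all add: dist_pt add.commute)
  show ?thesis
  proof (cases "\<sigma> = 0")
    case True
    then show ?thesis using assms(2) by (simp add: drift_def the_S foot)
  next
    case False
    then have "\<sigma> + (\<bar>\<sigma>\<bar> - x) / \<bar>\<sigma>\<bar> * (0 - \<sigma>) = sgn \<sigma> * x"
      by (simp add: field_simps sgn_if)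
    then have "pt \<sigma> 0 + ((\<bar>\<sigma>\<bar> - x) / \<bar>\<sigma>\<bar>) *\<^sub>R (pt 0 0 - pt \<sigma> 0) = pt (sgn \<sigma> * x) 0"
      using pt_add_scaleR_diff[of \<sigma> 0 "(\<bar>\<sigma>\<bar> - x) / \<bar>\<sigma>\<bar>" 0 0] by simp
    then show ?thesis
      using assms(2) False by (simp add: drift_def the_S foot dists pt_eq_iff x_def Let_def)
  qed
qed

lemma drift_eq_parallel:
  assumes "\<nexists>S. M \<inter> axis = {S}"
  shows "drift M (pt 0 h) axis = pt 0 0"
  using assms by (simp add: drift_def closest_point_axis)

lemma drift_potential_intersecting:
  assumes "h > 0" "M \<inter> axis = {pt \<sigma> 0}"
  defines "P' \<equiv> drift M (pt 0 h) axis"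
  shows "dist (pt 0 h) P' + sqrt 3 * dist P' (pt \<alpha> 0)
    \<le> sqrt 3 * dist (pt 0 h) (pt (l * \<sigma>) ((1 - l) * h)) + 3 * dist (pt (l * \<sigma>) ((1 - l) * h)) (pt \<alpha> 0)"
proof -
  define x where "x = (h + \<bar>\<sigma>\<bar> - sqrt (h\<^sup>2 + \<sigma>\<^sup>2)) / sqrt 2"
  have P': "P' = pt (sgn \<sigma> * x) 0"
    unfolding P'_def x_def by (rule drift_eq_intersecting[OF assms(1,2)])
  have "(sgn \<sigma> * x)\<^sup>2 = x\<^sup>2"
  proof (cases "\<sigma> = 0")
    case True
    then show ?thesis using \<open>h > 0\<close> by (simp add: x_def)
  qed (simp add: power_mult_distrib sgn_if)
  then have "dist (pt 0 h) P' = sqrt (h\<^sup>2 + x\<^sup>2)"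
    by (simp add: P' dist_pt add.commute)
  moreover have "dist P' (pt \<alpha> 0) = \<bar>sgn \<sigma> * x - \<alpha>\<bar>"
    by (simp add: P' dist_pt)
  moreover have "dist (pt 0 h) (pt (l * \<sigma>) ((1 - l) * h)) = \<bar>l\<bar> * sqrt (h\<^sup>2 + \<sigma>\<^sup>2)"
  proof -
    have "(0 - l * \<sigma>)\<^sup>2 + (h - (1 - l) * h)\<^sup>2 = l\<^sup>2 * (h\<^sup>2 + \<sigma>\<^sup>2)"
      by (simp add: power2_eq_square algebra_simps)
    then show ?thesis by (simp add: dist_pt real_sqrt_mult)
  qed
  moreover have "dist (pt (l * \<sigma>) ((1 - l) * h)) (pt \<alpha> 0) = sqrt (((1 - l) * h)\<^sup>2 + (l * \<sigma> - \<alpha>)\<^sup>2)"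
    by (simp add: dist_pt add.commute)
  ultimately show ?thesis
    using drift_potential_intersecting_scalar[OF \<open>h > 0\<close>, of \<sigma> \<alpha> l] by (simp add: x_def mult.assoc)
qed

lemma drift_potential_parallel:
  assumes "h > 0" "\<nexists>S. M \<inter> axis = {S}"
  defines "P' \<equiv> drift M (pt 0 h) axis"
  shows "dist (pt 0 h) P' + sqrt 3 * dist P' (pt \<alpha> 0)
    \<le> sqrt 3 * dist (pt 0 h) (pt \<mu> h) + 3 * dist (pt \<mu> h) (pt \<alpha> 0)"
  using drift_potential_parallel_scalar[OF \<open>h > 0\<close>, of \<alpha> \<mu>] \<open>h > 0\<close>
  by (simp add: P'_def drift_eq_parallel[OF assms(2)] dist_pt add.commute)

lemma drift_potential_planar:
  assumes "h > 0" and M: "M = range (\<lambda>t. pt (t * a) (h + t * b))" and "B \<in> M" "A' \<in> axis"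
  defines "P' \<equiv> drift M (pt 0 h) axis"
  shows "dist (pt 0 h) P' + sqrt 3 * dist P' A' \<le> sqrt 3 * dist (pt 0 h) B + 3 * dist B A'"
proof -
  obtain t where B: "B = pt (t * a) (h + t * b)" using \<open>B \<in> M\<close> M by blast
  obtain \<alpha> where A': "A' = pt \<alpha> 0" using \<open>A' \<in> axis\<close> by (auto simp: axis_def)
  show ?thesis
  proof (cases "b = 0")
    case True
    then have "M \<inter> axis = {}" using M \<open>h > 0\<close> by (auto simp: axis_def pt_eq_iff)
    then show ?thesis
      using drift_potential_parallel[OF \<open>h > 0\<close>, of M \<alpha> "t * a"] True
      by (simp add: P'_def A' B)
  next
    case False
    define t\<^sub>0 where "t\<^sub>0 = - h / b"
    have meets_axis: "h + t * b = 0 \<longleftrightarrow> t = t\<^sub>0" for t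
      using False by (auto simp: t\<^sub>0_def field_simps)
    have "pt (t\<^sub>0 * a) 0 \<in> M"
      unfolding M using meets_axis[of t\<^sub>0] by (auto intro: image_eqI[where x = t\<^sub>0])
    moreover have "y = pt (t\<^sub>0 * a) 0" if "y \<in> M \<inter> axis" for y
      using that by (auto simp: M axis_def pt_eq_iff meets_axis)
    ultimately have "M \<inter> axis = {pt (t\<^sub>0 * a) 0}" by (auto simp: axis_def)
    moreover have "B = pt ((t / t\<^sub>0) * (t\<^sub>0 * a)) ((1 - t / t\<^sub>0) * h)"
      using False \<open>h > 0\<close> by (simp add: B t\<^sub>0_def pt_eq_iff field_simps)
    ultimately show ?thesis
      using drift_potential_intersecting[OF \<open>h > 0\<close>, of M "t\<^sub>0 * a" \<alpha> "t / t\<^sub>0"]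
      by (simp add: P'_def A')
  qed
qed

lemma closest_point_plane_line:
  "closest_point plane ` range (\<lambda>t. pt 0 h + t *\<^sub>R v)
     = range (\<lambda>t. pt (t * inner v w) (h + t * inner v e))"
proof -
  have "closest_point plane (pt 0 h + t *\<^sub>R v) = pt (t * inner v w) (h + t * inner v e)" for t
    unfolding closest_point_plane by (simp add: pt_def inner_add_left)
  then show ?thesis by (simp add: image_image)
qed

lemma extdrift_step_in_plane:
  assumes "h > 0" "is_line L" "pt 0 h \<in> L" "A \<in> L" "extdrift_step L (pt 0 h) axis P'"
  obtains M a b where "M = range (\<lambda>t. pt (t * a) (h + t * b))"
    "closest_point plane A \<in> M" "P' = drift M (pt 0 h) axis"
proof -
  have "pt 0 h \<notin> axis" using \<open>h > 0\<close> by (auto simp: axis_def pt_eq_iff)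
  then have U: "affine hull (insert (pt 0 h) axis) = plane"
    using affine_hull_insert_axis \<open>h > 0\<close> by simp
  obtain M where M: "if closest_point plane ` L = {pt 0 h}
      then is_line M \<and> M \<subseteq> plane \<and> pt 0 h \<in> M else M = closest_point plane ` L"
    and P': "P' = drift M (pt 0 h) axis"
    using assms(5) \<open>pt 0 h \<notin> axis\<close> unfolding extdrift_step_def U Let_def by auto
  obtain v where L: "L = range (\<lambda>t. pt 0 h + t *\<^sub>R v)"
    using is_line_eq_range[OF assms(2,3)] by blast
  have B: "closest_point plane A \<in> closest_point plane ` L" using \<open>A \<in> L\<close> by blast
  show ?thesis
  proof (cases "closest_point plane ` L = {pt 0 h}")
    case True
    with M obtain a b where "M = range (\<lambda>t. pt (0 + t * a) (h + t * b))"
      using line_in_plane_eq_range by metis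
    moreover have "closest_point plane A \<in> M" using True B M by auto
    ultimately show ?thesis using that P' by simp
  next
    case False
    then show ?thesis
      using that M P' B unfolding L closest_point_plane_line by auto
  qed
qed

end

section \<open>The potential inequality for one ExtDrift step\<close>

lemma line_frame:
  fixes L :: "'a::euclidean_space set"
  assumes "is_line L" "P \<notin> L"
  obtains c w e h where "plane_frame w e" "h > 0"
    "P = plane_frame.pt c w e 0 h" "L = plane_frame.axis c w e"
proof -
  obtain Q where "Q \<in> L" using is_line_nonempty[OF assms(1)] by blast
  then obtain v where "v \<noteq> 0" and L_v: "L = range (\<lambda>t. Q + t *\<^sub>R v)"
    using is_line_eq_range[OF assms(1)] by blast
  define w where "w = v /\<^sub>R norm v"
  have "norm w = 1" using \<open>v \<noteq> 0\<close> by (simp add: w_def)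
  have "L = range (\<lambda>t. Q + t *\<^sub>R w)"
    using L_v range_line_reparametrize[of "norm v" Q 0 w] \<open>v \<noteq> 0\<close> by (simp add: w_def)
  define c where "c = Q + inner (P - Q) w *\<^sub>R w"
  have L_w: "L = range (\<lambda>t. c + t *\<^sub>R w)"
    using \<open>L = range (\<lambda>t. Q + t *\<^sub>R w)\<close> range_line_reparametrize[of 1 Q "inner (P - Q) w" w]
    by (simp add: c_def)
  have "c \<in> L" unfolding L_w by (rule image_eqI[where x = 0]) simp_all
  define h where "h = norm (P - c)"
  define e where "e = (P - c) /\<^sub>R h"
  have "h > 0" using \<open>c \<in> L\<close> assms(2) by (auto simp: h_def)
  have "inner w w = 1" using \<open>norm w = 1\<close> by (simp add: dot_square_norm)
  then have "inner w (P - c) = 0"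
    by (simp add: c_def inner_diff_right inner_add_right inner_commute)
  then interpret plane_frame c w e
    using \<open>norm w = 1\<close> \<open>h > 0\<close> by unfold_locales (simp_all add: e_def h_def)
  have "P = pt 0 h" unfolding pt_def using \<open>h > 0\<close> by (simp add: e_def h_def)
  moreover have "L = axis" by (simp add: L_w axis_def pt_def)
  ultimately show ?thesis using that plane_frame_axioms \<open>h > 0\<close> by blast
qed

lemma extdrift_step_potential:
  fixes L L' :: "'a::euclidean_space set"
  assumes "is_line L" "is_line L'" "P \<in> L" "A \<in> L" "A' \<in> L'" "extdrift_step L P L' P'"
  shows "dist P P' + sqrt 3 * dist P' A' \<le> sqrt 3 * dist P A + 3 * dist A A'"
proof (cases "P \<in> L'")
  case True
  then have "P' = P" using assms(6) by (simp add: extdrift_step_def)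
  have "sqrt 3 * dist P A' \<le> sqrt 3 * (dist P A + dist A A')"
    by (simp add: dist_triangle)
  also have "\<dots> \<le> sqrt 3 * dist P A + 3 * dist A A'"
    using mult_right_mono[of "sqrt 3" 3 "dist A A'"] by (simp add: distrib_left real_sqrt_le_iff real_le_lsqrt)
  finally show ?thesis using \<open>P' = P\<close> by simp
next
  case False
  then obtain c w e h where "plane_frame w e" "h > 0"
    and P: "P = plane_frame.pt c w e 0 h" and L': "L' = plane_frame.axis c w e"
    using line_frame[OF assms(2)] by blast
  interpret plane_frame c w e by fact
  define B where "B = closest_point plane A"
  have "closest_point plane P = P" "closest_point plane A' = A'"
    using assms(5) by (auto simp: P L' plane_def axis_def intro: closest_point_self)
  moreover have "dist (closest_point plane x) (closest_point plane y) \<le> dist x y" for x y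
    using affine_plane by (intro closest_point_lipschitz affine_imp_convex affine_closed) (auto simp: plane_def)
  ultimately have "dist P B \<le> dist P A" "dist B A' \<le> dist A A'"
    unfolding B_def by (metis dist_commute)+
  moreover obtain M a b where "M = range (\<lambda>t. pt (t * a) (h + t * b))" "B \<in> M"
    "P' = drift M (pt 0 h) axis"
    using extdrift_step_in_plane[OF \<open>h > 0\<close> assms(1) assms(3)[unfolded P] assms(4)
        assms(6)[unfolded P L']]
    unfolding B_def by blast
  then have "dist P P' + sqrt 3 * dist P' A' \<le> sqrt 3 * dist P B + 3 * dist B A'"
    using drift_potential_planar[OF \<open>h > 0\<close>] assms(5) unfolding P L' by blast
  ultimately show ?thesis by (smt (verit) real_sqrt_ge_zero mult_left_mono)
qed

section \<open>Amortized analysis\<close>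

lemma path_cost_Suc: "path_cost A (Suc n) = path_cost A n + dist (A n) (A (Suc n))"
  by (simp add: path_cost_def)

lemma path_cost_amortized:
  fixes P A :: "nat \<Rightarrow> 'a::euclidean_space" and \<Phi> :: "nat \<Rightarrow> real"
  assumes "\<And>n. n < m \<Longrightarrow> dist (P n) (P (Suc n)) + \<Phi> (Suc n) \<le> \<Phi> n + c * dist (A n) (A (Suc n))"
  shows "path_cost P m + \<Phi> m \<le> \<Phi> 0 + c * path_cost A m"
  using assms
proof (induction m)
  case (Suc m)
  then have "path_cost P m + \<Phi> m \<le> \<Phi> 0 + c * path_cost A m" by simp
  with Suc.prems[of m] show ?case by (simp add: path_cost_Suc distrib_left)
qed (simp add: path_cost_def)

lemma le_OPT:
  assumes "\<And>t. t \<in> {1..m} \<Longrightarrow> X t \<noteq> {}"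
    and "\<And>A. A 0 = P0 \<Longrightarrow> (\<forall>t\<in>{1..m}. A t \<in> X t) \<Longrightarrow> y \<le> path_cost A m"
  shows "y \<le> OPT P0 X m"
  unfolding OPT_def
proof (rule cInf_greatest)
  define A where "A t = (if t = 0 then P0 else SOME x. x \<in> X t)" for t
  have "\<forall>t\<in>{1..m}. A t \<in> X t" using assms(1) by (auto simp: A_def some_in_eq)
  moreover have "A 0 = P0" by (simp add: A_def)
  ultimately show "{path_cost A m |A. A 0 = P0 \<and> (\<forall>t\<in>{1..m}. A t \<in> X t)} \<noteq> {}" by blast
qed (use assms(2) in blast)

lemma extdrift_path_cost_le:
  assumes lines: "\<And>n. n \<le> m \<Longrightarrow> is_line (Y n)"
    and steps: "\<And>n. n < m \<Longrightarrow> extdrift_step (Y n) (P n) (Y (Suc n)) (P (Suc n))"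
    and "P 0 \<in> Y 0" "A 0 = P 0" and A_on_lines: "\<And>n. n \<le> m \<Longrightarrow> A n \<in> Y n"
  shows "path_cost P m \<le> 3 * path_cost A m"
proof -
  have on_lines: "P n \<in> Y n" if "n \<le> m" for n
  proof (cases n)
    case (Suc k)
    then show ?thesis using that extdrift_step_in_line[OF lines steps, of k] by simp
  qed (use \<open>P 0 \<in> Y 0\<close> in simp)
  have "path_cost P m + sqrt 3 * dist (P m) (A m) \<le> sqrt 3 * dist (P 0) (A 0) + 3 * path_cost A m"
  proof (rule path_cost_amortized)
    fix n assume "n < m"
    then show "dist (P n) (P (Suc n)) + sqrt 3 * dist (P (Suc n)) (A (Suc n))
        \<le> sqrt 3 * dist (P n) (A n) + 3 * dist (A n) (A (Suc n))"
      by (intro extdrift_step_potential[OF _ _ _ _ _ steps]) (simp_all add: lines on_lines A_on_lines)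
  qed
  then have "path_cost P m + sqrt 3 * dist (P m) (A m) \<le> 3 * path_cost A m"
    using \<open>A 0 = P 0\<close> by simp
  moreover have "0 \<le> sqrt 3 * dist (P m) (A m)" by simp
  ultimately show ?thesis by linarith
qed

theorem mainTheorem2:
  fixes P0 :: "'a::euclidean_space" and L0 :: "'a set"
    and X :: "nat \<Rightarrow> 'a set" and P :: "nat \<Rightarrow> 'a" and m :: nat
  assumes "DIM('a) \<ge> 2"
    and "is_line L0" and "P0 \<in> L0"
    and "\<forall>t\<in>{1..m}. is_line (X t)"
    and "P 0 = P0"
    and "\<forall>t\<in>{1..m}. extdrift_step (if t = 1 then L0 else X (t - 1)) (P (t - 1)) (X t) (P t)"
  shows "path_cost P m \<le> 3 * OPT P0 X m"
proof -
  define Y where "Y n = (if n = 0 then L0 else X n)" for n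
  have lines: "is_line (Y n)" if "n \<le> m" for n
    using that assms(2,4) by (simp add: Y_def)
  have steps: "extdrift_step (Y n) (P n) (Y (Suc n)) (P (Suc n))" if "n < m" for n
    using that assms(6)[rule_format, of "Suc n"] by (cases n) (auto simp: Y_def)
  have "path_cost P m \<le> 3 * path_cost A m" if "A 0 = P0" "\<forall>t\<in>{1..m}. A t \<in> X t" for A
    by (rule extdrift_path_cost_le[where Y = Y]) (use lines steps that assms(3,5) in \<open>auto simp: Y_def\<close>)
  then have "path_cost P m / 3 \<le> OPT P0 X m"
    using assms(4) is_line_nonempty by (intro le_OPT) fastforce+
  then show ?thesis by simp
qed

end
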